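(* For every ring $R$ and every nonnegative integer $n$, the closure of $\mathcal{O}^n_0(R)$ in $R^R$ is contained in $\mathcal{D}^n(R)$.
   Context: Rings are commutative with unit. A derivation on $R$ is a map $d\colon R\to R$ with $d(x+y)=d(x)+d(y)$ and $d(xy)=d(x)y+d(y)x$. Inductively: $\mathcal{D}^0(R)=\{0\}$; for $n>0$, $D\in\mathcal{D}^n(R)$ if $D$ is additive and $D(xy)-D(x)y-D(y)x=B(x,y)$ for all $x,y\in R$, where $B$ in each variable separately is in $\mathcal{D}^{n-1}(R)$. A differential operator of degree at most $n$ on $R$ is an $R$-linear combination of finitely many maps $d_1\circ\cdots\circ d_k$, $d_i$ derivations on $R$, $k\le n$ (for $k=0$ the identity map). $\mathcal{O}^n_0(R)$ is the set of differential operators $D$ of degree at most $n$ with $D(1)=0$. $R^R$ carries the product topology with $R$ discrete. *)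

theory Defs
  imports "HOL-Analysis.Analysis"
begin

definition is_derivation :: "('a::comm_ring_1 \<Rightarrow> 'a) \<Rightarrow> bool" where
  "is_derivation d \<longleftrightarrow>
     (\<forall>x y. d (x + y) = d x + d y) \<and> (\<forall>x y. d (x * y) = d x * y + d y * x)"

fun Dcl :: "nat \<Rightarrow> ('a::comm_ring_1 \<Rightarrow> 'a) set" where
  "Dcl 0 = {\<lambda>_. 0}"
| "Dcl (Suc n) = {D. (\<forall>x y. D (x + y) = D x + D y) \<and>
      (\<forall>x. (\<lambda>y. D (x * y) - D x * y - D y * x) \<in> Dcl n) \<and>
      (\<forall>y. (\<lambda>x. D (x * y) - D x * y - D y * x) \<in> Dcl n)}"

definition diff_monomials :: "nat \<Rightarrow> ('a::comm_ring_1 \<Rightarrow> 'a) set" where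
  "diff_monomials n = {foldr (\<circ>) ds id | ds. length ds \<le> n \<and> (\<forall>d\<in>set ds. is_derivation d)}"

definition diff_ops :: "nat \<Rightarrow> ('a::comm_ring_1 \<Rightarrow> 'a) set" where
  "diff_ops n = {(\<lambda>x. \<Sum>i<m. c i * M i x) | (m::nat) c M. \<forall>i<m. M i \<in> diff_monomials n}"

definition O0 :: "nat \<Rightarrow> ('a::comm_ring_1 \<Rightarrow> 'a) set" where
  "O0 n = {D \<in> diff_ops n. D 1 = 0}"

definition RR_topology :: "('a \<Rightarrow> 'a) topology" where
  "RR_topology = product_topology (\<lambda>_. discrete_topology UNIV) UNIV"

end

theory Submission
  imports Defs
begin

text \<open>
  Every element of O0(n) lies in D^n: derivations lie in D^1, composing a derivation with an
  element of D^j lands in D^(j+1), and D^n is closed under R-linear combinations, which covers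
  D = \<Sum> c_i M_i with D(1) = 0 via D(x) = \<Sum> c_i (M_i(x) - M_i(1) x).
  Moreover D^n is closed in R^R: membership is decided by finitely many values at a time, and
  the product topology with R discrete makes agreement on a finite set an open condition.
\<close>

definition mult_defect :: "('a::comm_ring_1 \<Rightarrow> 'a) \<Rightarrow> 'a \<Rightarrow> 'a \<Rightarrow> 'a" where
  "mult_defect D x y = D (x * y) - D x * y - D y * x"

lemma mult_defect_commute: "mult_defect D x y = mult_defect D y x"
  by (simp add: mult_defect_def mult.commute)

text \<open>By commutativity the two defect conditions in the definition of D^(n+1) coincide.\<close>
lemma Dcl_Suc_iff:
  "D \<in> Dcl (Suc n) \<longleftrightarrow> (\<forall>x y. D (x + y) = D x + D y) \<and> (\<forall>x. mult_defect D x \<in> Dcl n)"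
proof -
  have left: "(\<lambda>y. D (x * y) - D x * y - D y * x) = mult_defect D x" for x
    by (simp add: fun_eq_iff mult_defect_def)
  have right: "(\<lambda>x. D (x * y) - D x * y - D y * x) = mult_defect D y" for y
    by (simp add: fun_eq_iff mult_defect_commute[of D y] mult_defect_def mult.commute)
  show ?thesis
    by (simp only: Dcl.simps mem_Collect_eq left right) blast
qed

declare Dcl.simps(2) [simp del]

lemma Dcl_zero: "(\<lambda>_. 0) \<in> Dcl n"
  by (induction n) (simp_all add: Dcl_Suc_iff mult_defect_def[abs_def])

lemma Dcl_add: "D \<in> Dcl n \<Longrightarrow> E \<in> Dcl n \<Longrightarrow> (\<lambda>x. D x + E x) \<in> Dcl n"
proof (induction n arbitrary: D E)
  case (Suc n)
  have "mult_defect (\<lambda>x. D x + E x) x = (\<lambda>y. mult_defect D x y + mult_defect E x y)" for x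
    by (auto simp: mult_defect_def algebra_simps)
  with Suc show ?case
    by (simp add: Dcl_Suc_iff add.assoc add.left_commute)
qed simp

lemma Dcl_scale: "D \<in> Dcl n \<Longrightarrow> (\<lambda>x. c * D x) \<in> Dcl n"
proof (induction n arbitrary: D)
  case (Suc n)
  have "mult_defect (\<lambda>x. c * D x) x = (\<lambda>y. c * mult_defect D x y)" for x
    by (auto simp: mult_defect_def algebra_simps)
  with Suc show ?case
    by (simp add: Dcl_Suc_iff distrib_left)
qed simp

lemma Dcl_sum: "(\<And>i. i \<in> I \<Longrightarrow> D i \<in> Dcl n) \<Longrightarrow> (\<lambda>x. \<Sum>i\<in>I. D i x) \<in> Dcl n"
proof (induction I rule: infinite_finite_induct)
  case (insert i I)
  then have "(\<lambda>x. D i x + (\<Sum>i\<in>I. D i x)) \<in> Dcl n"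
    by (intro Dcl_add) simp_all
  with insert.hyps show ?case
    by simp
qed (simp_all add: Dcl_zero)

lemma Dcl_Suc_mono: "D \<in> Dcl n \<Longrightarrow> D \<in> Dcl (Suc n)"
proof (induction n arbitrary: D)
  case 0
  then show ?case using Dcl_zero[of 1] by simp
next
  case (Suc n)
  then have "D (x + y) = D x + D y" and "mult_defect D x \<in> Dcl (Suc n)" for x y
    by (simp_all add: Dcl_Suc_iff)
  then show ?case
    by (subst Dcl_Suc_iff) blast
qed

lemma Dcl_mono: "m \<le> n \<Longrightarrow> D \<in> Dcl m \<Longrightarrow> D \<in> Dcl n"
  by (induction n rule: dec_induct) (simp_all add: Dcl_Suc_mono)

lemma derivation_zero:
  assumes "is_derivation d"
  shows "d 0 = 0"
proof -
  have "d (0 + 0) = d 0 + d 0"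
    using assms by (simp only: is_derivation_def)
  then show ?thesis by simp
qed

lemma derivation_one:
  assumes "is_derivation d"
  shows "d 1 = 0"
proof -
  have "d (1 * 1) = d 1 * 1 + d 1 * 1"
    using assms by (simp only: is_derivation_def)
  then show ?thesis by simp
qed

lemma derivation_diff:
  assumes "is_derivation d"
  shows "d (x - y) = d x - d y"
proof -
  have "d x = d ((x - y) + y)" by simp
  also have "\<dots> = d (x - y) + d y"
    using assms by (simp only: is_derivation_def)
  finally show ?thesis
    by (simp add: eq_diff_eq)
qed

lemma derivation_in_Dcl_1: "is_derivation d \<Longrightarrow> d \<in> Dcl (Suc 0)"
  by (simp add: Dcl_Suc_iff is_derivation_def mult_defect_def[abs_def] algebra_simps)

lemma derivation_comp_Dcl:
  assumes d: "is_derivation d"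
  shows "E \<in> Dcl j \<Longrightarrow> d \<circ> E \<in> Dcl (Suc j)"
proof (induction j arbitrary: E)
  case 0
  then show ?case
    using Dcl_zero[of 1] derivation_zero[OF d] by (simp add: o_def)
next
  case (Suc j)
  have d_Suc: "d \<in> Dcl (Suc j)"
    using Dcl_mono[OF _ derivation_in_Dcl_1[OF d], of "Suc j"] by simp
  have "mult_defect (d \<circ> E) x \<in> Dcl (Suc j)" for x
  proof -
    text \<open>Write E(xy) = mult_defect E x y + E(x) y + E(y) x and apply the Leibniz rule.\<close>
    have "mult_defect (d \<circ> E) x = (\<lambda>y. E x * d y + (d x * E y + (d \<circ> mult_defect E x) y))"
      using d by (auto simp: mult_defect_def derivation_diff is_derivation_def algebra_simps)
    moreover have "mult_defect E x \<in> Dcl j"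
      using Suc.prems Dcl_Suc_iff by blast
    then have "d \<circ> mult_defect E x \<in> Dcl (Suc j)"
      by (rule Suc.IH)
    ultimately show ?thesis
      using d_Suc Suc.prems by (simp only: Dcl_add Dcl_scale)
  qed
  moreover have "(d \<circ> E) (x + y) = (d \<circ> E) x + (d \<circ> E) y" for x y
    using d Suc.prems by (simp add: Dcl_Suc_iff is_derivation_def)
  ultimately show ?case
    by (subst Dcl_Suc_iff) blast
qed

lemma foldr_derivations_one:
  "ds \<noteq> [] \<Longrightarrow> \<forall>d\<in>set ds. is_derivation d \<Longrightarrow> foldr (\<circ>) ds id 1 = 0"
  by (induction ds rule: list_nonempty_induct) (simp_all add: derivation_one derivation_zero)

lemma foldr_derivations_Dcl:
  "ds \<noteq> [] \<Longrightarrow> \<forall>d\<in>set ds. is_derivation d \<Longrightarrow> foldr (\<circ>) ds id \<in> Dcl (length ds)"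
  by (induction ds rule: list_nonempty_induct) (simp_all add: derivation_in_Dcl_1 derivation_comp_Dcl)

lemma diff_monomial_Dcl:
  assumes "M \<in> diff_monomials n"
  shows "(\<lambda>x. M x - M 1 * x) \<in> Dcl n"
proof -
  obtain ds where ds: "M = foldr (\<circ>) ds id" "length ds \<le> n" "\<forall>d\<in>set ds. is_derivation d"
    using assms unfolding diff_monomials_def by auto
  show ?thesis
  proof (cases "ds = []")
    case True
    then show ?thesis using ds Dcl_zero[of n] by simp
  next
    case False
    then have "M \<in> Dcl (length ds)" and "M 1 = 0"
      using ds foldr_derivations_one foldr_derivations_Dcl by simp_all
    then show ?thesis
      using Dcl_mono[OF ds(2)] by simp
  qed
qed

lemma O0_subset_Dcl: "O0 n \<subseteq> Dcl n"
proof
  fix D :: "'a \<Rightarrow> 'a" assume "D \<in> O0 n"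
  then obtain m :: nat and c M where D: "D = (\<lambda>x. \<Sum>i<m. c i * M i x)"
    and M: "\<forall>i<m. M i \<in> diff_monomials n" and D1: "D 1 = 0"
    unfolding O0_def diff_ops_def by blast
  have "D = (\<lambda>x. D x - D 1 * x)"
    using D1 by simp
  also have "\<dots> = (\<lambda>x. \<Sum>i<m. c i * (M i x - M i 1 * x))"
    by (simp add: D algebra_simps sum_subtractf sum_distrib_left)
  also have "\<dots> \<in> Dcl n"
    using M by (intro Dcl_sum Dcl_scale diff_monomial_Dcl) simp
  finally show "D \<in> Dcl n" .
qed

lemma Dcl_if_agrees_on_finite:
  "(\<And>F. finite F \<Longrightarrow> \<exists>E\<in>Dcl n. \<forall>z\<in>F. E z = D z) \<Longrightarrow> D \<in> Dcl n"
proof (induction n arbitrary: D)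
  case 0
  have "D z = 0" for z
    using "0.prems"[of "{z}"] by auto
  then show ?case by auto
next
  case (Suc n)
  have "D (x + y) = D x + D y" for x y
    using Suc.prems[of "{x, y, x + y}"] by (auto simp: Dcl_Suc_iff)
  moreover have "mult_defect D x \<in> Dcl n" for x
  proof (rule Suc.IH)
    fix F :: "'a set" assume "finite F"
    then obtain E where "E \<in> Dcl (Suc n)" and E: "\<forall>z\<in>insert x (F \<union> (*) x ` F). E z = D z"
      using Suc.prems[of "insert x (F \<union> (*) x ` F)"] by auto
    moreover have "\<forall>z\<in>F. mult_defect E x z = mult_defect D x z"
      using E by (simp add: mult_defect_def)
    ultimately show "\<exists>E'\<in>Dcl n. \<forall>z\<in>F. E' z = mult_defect D x z"
      by (auto simp: Dcl_Suc_iff)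
  qed
  ultimately show ?case
    by (simp add: Dcl_Suc_iff)
qed

lemma RR_closure_agrees_on_finite:
  assumes "f \<in> RR_topology closure_of S" "finite F"
  shows "\<exists>g\<in>S. \<forall>z\<in>F. g z = f z"
proof -
  let ?U = "\<Pi>\<^sub>E z\<in>UNIV. if z \<in> F then {f z} else UNIV"
  have "openin RR_topology ?U"
    unfolding RR_topology_def
    by (subst openin_PiE_gen) (auto intro: finite_subset[OF _ assms(2)])
  moreover have "f \<in> ?U" by auto
  ultimately obtain g where "g \<in> S" "g \<in> ?U"
    using assms(1) by (auto simp: in_closure_of)
  then show ?thesis by (auto simp: PiE_iff split: if_splits)
qed

lemma closedin_Dcl: "closedin RR_topology (Dcl n)"
proof -
  have "RR_topology closure_of Dcl n \<subseteq> Dcl n"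
    using RR_closure_agrees_on_finite Dcl_if_agrees_on_finite by blast
  then show ?thesis
    by (simp add: RR_topology_def flip: closure_of_subset_eq)
qed

theorem lemma2p2:
  fixes n :: nat
  shows "RR_topology closure_of (O0 n :: ('a::comm_ring_1 \<Rightarrow> 'a) set) \<subseteq> Dcl n"
  using O0_subset_Dcl closedin_Dcl by (rule closure_of_minimal)

end
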